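(* Let $\mathcal H,\mathcal I$ be RKHSs on sets $\mathcal X,\mathcal Z$ with kernels $k_x,k_z$, let $n\in\mathbb N$, $\lambda,\nu>0$, and let $X=(x_1,\dots,x_n)\in\mathcal X^n$, $Z=(z_1,\dots,z_n)\in\mathcal Z^n$ be arbitrary. Suppose $y_i=f_0(x_i)+e_i$, where $e_1,\dots,e_n$ are i.i.d. with mean $0$ and variance $\lambda$, independent of $(X,Z)$ (and of $f_0$ when $f_0$ is random). Let $\hat f_n:=(\hat V+\bar\lambda I)^{-1}\hat C_{xz}(\hat C_z+\bar\nu I)^{-1}\tfrac1nS_z^*Y$, $\mathcal C:=I-(\hat V+\bar\lambda I)^{-1}\hat V$ and $$\Delta\mathcal C:=\bar\lambda\bar\nu\,(\hat V+\bar\lambda I)^{-1}\hat C_{xz}(\hat C_z+\bar\nu I)^{-2}\hat C_{zx}(\hat V+\bar\lambda I)^{-1}.$$ Then $\Delta\mathcal C$ is a non-negative operator, and for every $k_*\in\mathcal H$, $$\langle k_*,\mathcal Ck_*\rangle_{\mathcal H}=\sup_{\|f_0\|_{\mathcal H}=1}\mathbb E_{Y\mid X,Z}\langle k_*,\hat f_n-f_0\rangle_{\mathcal H}^2+\langle k_*,\Delta\mathcal C\,k_*\rangle_{\mathcal H}=\mathbb E_{f_0\sim\mathcal{GP}(0,k_x)}\mathbb E_{Y\mid X,Z}\langle k_*,\hat f_n-f_0\rangle_{\mathcal H}^2+\langle k_*,\Delta\mathcal C\,k_*\rangle_{\mathcal H}.$$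
   Context: $Y=(y_1,\dots,y_n)$. $S_x:\mathcal H\to\mathbb R^n$, $f\mapsto(f(x_1),\dots,f(x_n))$ and $S_z:\mathcal I\to\mathbb R^n$, $g\mapsto(g(z_1),\dots,g(z_n))$, with adjoints $S_x^*,S_z^*$. $\hat C_z:=\frac1nS_z^*S_z$, $\hat C_{zx}:=\frac1nS_z^*S_x$, $\hat C_{xz}:=\hat C_{zx}^*$, $\hat V:=\hat C_{xz}(\hat C_z+\bar\nu I)^{-1}\hat C_{zx}$, $\bar\lambda:=\lambda/n$, $\bar\nu:=\nu/n$. ($\hat f_n$ is the quasi-posterior mean and $\langle k_*,\mathcal Ck_*\rangle_{\mathcal H}$ the quasi-posterior variance of $\langle k_*,f\rangle_{\mathcal H}$ for the GP prior $\mathcal{GP}(0,k_x)$ and dual-IV quasi-likelihood.) For $f_0\sim\mathcal{GP}(0,k_x)$, $\langle k_*,f_0\rangle_{\mathcal H}$ denotes the centred Gaussian variable with variance $\|k_*\|_{\mathcal H}^2$, jointly Gaussian with the process, with $\mathrm{Cov}(\langle k_*,f_0\rangle_{\mathcal H},f_0(x))=k_*(x)$. *)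

theory Defs
  imports "HOL-Analysis.Analysis" "HOL-Probability.Probability"
begin

text \<open>An RKHS on a set is represented (up to isometric isomorphism) by a Hilbert space
  together with its canonical feature map \<open>k :: 'x \<Rightarrow> 'h\<close> (so \<open>k x = k_x(x,\<cdot>)\<close>),
  whose image spans a dense subspace; a vector \<open>f\<close> is the function
  \<open>x \<mapsto> inner f (k x)\<close> (reproducing property), and the kernel is
  \<open>k_x(x,x') = inner (k x) (k x')\<close>.\<close>

definition rkhs_feature :: "('x \<Rightarrow> 'h::{real_inner,complete_space}) \<Rightarrow> bool" where
  "rkhs_feature k \<longleftrightarrow> closure (span (range k)) = UNIV"

definition eval_fun :: "('x \<Rightarrow> 'h::real_inner) \<Rightarrow> 'h \<Rightarrow> 'x \<Rightarrow> real" where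
  "eval_fun k f x = inner f (k x)"

text \<open>Sampling operator \<open>S : f \<mapsto> (f(x_1),\<dots>,f(x_n))\<close> (vectors of \<open>\<real>^n\<close> as
  functions on \<open>{..<n}\<close>, zero outside) and its adjoint \<open>S^* a = \<Sum>_i a_i k(x_i)\<close>.\<close>

definition samp :: "('x \<Rightarrow> 'h::real_inner) \<Rightarrow> nat \<Rightarrow> (nat \<Rightarrow> 'x) \<Rightarrow> 'h \<Rightarrow> nat \<Rightarrow> real" where
  "samp k n X f = (\<lambda>i. if i < n then eval_fun k f (X i) else 0)"

definition samp_adj :: "('x \<Rightarrow> 'h::real_inner) \<Rightarrow> nat \<Rightarrow> (nat \<Rightarrow> 'x) \<Rightarrow> (nat \<Rightarrow> real) \<Rightarrow> 'h" where
  "samp_adj k n X a = (\<Sum>i<n. a i *\<^sub>R k (X i))"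

definition Cz_hat :: "('z \<Rightarrow> 'i::real_inner) \<Rightarrow> nat \<Rightarrow> (nat \<Rightarrow> 'z) \<Rightarrow> 'i \<Rightarrow> 'i" where
  "Cz_hat kz n Z g = (1 / real n) *\<^sub>R samp_adj kz n Z (samp kz n Z g)"

definition Czx_hat :: "('x \<Rightarrow> 'h::real_inner) \<Rightarrow> ('z \<Rightarrow> 'i::real_inner) \<Rightarrow> nat
    \<Rightarrow> (nat \<Rightarrow> 'x) \<Rightarrow> (nat \<Rightarrow> 'z) \<Rightarrow> 'h \<Rightarrow> 'i" where
  "Czx_hat kx kz n X Z f = (1 / real n) *\<^sub>R samp_adj kz n Z (samp kx n X f)"

definition Cxz_hat :: "('x \<Rightarrow> 'h::real_inner) \<Rightarrow> ('z \<Rightarrow> 'i::real_inner) \<Rightarrow> nat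
    \<Rightarrow> (nat \<Rightarrow> 'x) \<Rightarrow> (nat \<Rightarrow> 'z) \<Rightarrow> 'i \<Rightarrow> 'h" where
  "Cxz_hat kx kz n X Z g = (1 / real n) *\<^sub>R samp_adj kx n X (samp kz n Z g)"

text \<open>Inverse of \<open>T + c I\<close> (these operators are bijective for \<open>c > 0\<close>).\<close>
definition resolv :: "('a::real_vector \<Rightarrow> 'a) \<Rightarrow> real \<Rightarrow> 'a \<Rightarrow> 'a" where
  "resolv T c = inv (\<lambda>h. T h + c *\<^sub>R h)"

definition V_hat where
  "V_hat kx kz n X Z nu = Cxz_hat kx kz n X Z \<circ> resolv (Cz_hat kz n Z) (nu / real n) \<circ> Czx_hat kx kz n X Z"

definition f_hat where
  "f_hat kx kz n X Z lam nu Y =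
     resolv (V_hat kx kz n X Z nu) (lam / real n)
       (Cxz_hat kx kz n X Z (resolv (Cz_hat kz n Z) (nu / real n) ((1 / real n) *\<^sub>R samp_adj kz n Z Y)))"

definition C_post where
  "C_post kx kz n X Z lam nu h =
     h - resolv (V_hat kx kz n X Z nu) (lam / real n) (V_hat kx kz n X Z nu h)"

definition DeltaC where
  "DeltaC kx kz n X Z lam nu =
     (\<lambda>h. ((lam / real n) * (nu / real n)) *\<^sub>R
        (resolv (V_hat kx kz n X Z nu) (lam / real n) \<circ> Cxz_hat kx kz n X Z
         \<circ> resolv (Cz_hat kz n Z) (nu / real n) \<circ> resolv (Cz_hat kz n Z) (nu / real n)
         \<circ> Czx_hat kx kz n X Z \<circ> resolv (V_hat kx kz n X Z nu) (lam / real n)) h)"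

definition centred_gaussian :: "'w measure \<Rightarrow> ('w \<Rightarrow> real) \<Rightarrow> real \<Rightarrow> bool" where
  "centred_gaussian M W v \<longleftrightarrow> W \<in> borel_measurable M \<and>
     (if v = 0 then (AE w in M. W w = 0)
      else v > 0 \<and> distributed M lborel W (normal_density 0 (sqrt v)))"

text \<open>\<open>(L, (F x)_x)\<close> is a centred jointly Gaussian family, where \<open>F\<close> is \<open>f_0 \<sim> GP(0,k_x)\<close>
  and \<open>L\<close> is \<open>\<langle>k_*, f_0\<rangle>_H\<close>: every finite linear combination is centred Gaussian with the
  variance given by the covariances \<open>Cov(F x, F x') = k_x(x,x')\<close>, \<open>Var L = \<parallel>k_*\<parallel>^2\<close>,
  \<open>Cov(L, F x) = k_*(x)\<close>.\<close>
definition gp_with_functional ::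
    "'w measure \<Rightarrow> ('x \<Rightarrow> 'h::real_inner) \<Rightarrow> 'h \<Rightarrow> ('x \<Rightarrow> 'w \<Rightarrow> real) \<Rightarrow> ('w \<Rightarrow> real) \<Rightarrow> bool" where
  "gp_with_functional M kx kstar F L \<longleftrightarrow>
     (\<forall>S c a. finite S \<longrightarrow>
        centred_gaussian M (\<lambda>w. a * L w + (\<Sum>x\<in>S. c x * F x w))
          (a\<^sup>2 * (norm kstar)\<^sup>2 + 2 * a * (\<Sum>x\<in>S. c x * eval_fun kx kstar x)
           + (\<Sum>x\<in>S. \<Sum>x'\<in>S. c x * c x' * inner (kx x) (kx x'))))"

end

theory Submission
  imports Defs
begin

(* Everything is linear in Y: with R = (V + lam_bar I)^-1, A = (C_z + nu_bar I)^-1,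
   r = R k_* and w = A C_zx r, the posterior mean functional is <k_*, f_hat> = sum_i b_i y_i with
   b_i = w(z_i)/n, and k_* - sum_i b_i k_x(x_i) = lam_bar r.  Expanding <k_*, r> = <r, V r> + lam_bar |r|^2
   through C_zx r = C_z w + nu_bar w splits the posterior variance lam_bar <k_*, r> into the squared
   bias |lam_bar r|^2, the noise term lam sum_i b_i^2 and <k_*, DeltaC k_*> = lam_bar nu_bar |w|^2.
   For fixed f_0 the expected squared error is <f_0, lam_bar r>^2 + lam sum_i b_i^2, whose supremum over
   the unit sphere is attained at f_0 parallel to r; under the GP prior the bias term
   sum_i b_i f_0(x_i) - <k_*, f_0> is centred Gaussian with variance |k_* - sum_i b_i k_x(x_i)|^2 and
   independent of the noise.  Both resolvents exist because C_z and V are positive of finite rank. *)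

lemma span_subset_image_span:
  fixes f :: "'a::real_vector \<Rightarrow> 'a"
  assumes lin: "linear f" and fin: "finite W" and into: "f ` span W \<subseteq> span W"
    and inj: "inj_on f (span W)"
  shows "span W \<subseteq> f ` span W"
proof -
  obtain B where B: "B \<subseteq> span W" "independent B" "span W \<subseteq> span B"
    by (meson basis_exists)
  have span_B: "span B = span W"
    using B(1,3) span_minimal[OF B(1) subspace_span] span_mono by blast
  have fin_B: "finite B"
    using independent_span_bound[OF fin B(2)] B(1) by blast
  have inj_B: "inj_on f B"
    using inj B(1) inj_on_subset by blast
  have indep_fB: "independent (f ` B)"
    using B(2) inj lin linear_dependent_inj_imageD span_B by metis
  have "a \<in> span (f ` B)" if a: "a \<in> span W" for a
  proof (rule ccontr)
    assume a_out: "a \<notin> span (f ` B)"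
    then have "independent (insert a (f ` B))"
      using indep_fB by (simp add: independent_insertI)
    moreover have "insert a (f ` B) \<subseteq> span B"
      using a B(1) into span_superset unfolding span_B by blast
    ultimately have "card (insert a (f ` B)) \<le> card B"
      using independent_span_bound[OF fin_B] by blast
    moreover have "a \<notin> f ` B"
      using a_out span_base by metis
    ultimately show False
      using fin_B inj_B by (simp add: card_image)
  qed
  then have "span W \<subseteq> span (f ` B)" by blast
  also have "\<dots> = f ` span W"
    using lin span_B by (simp add: span_linear_image)
  finally show ?thesis .
qed

locale finite_rank_psd =
  fixes T :: "'a::real_inner \<Rightarrow> 'a"
  assumes linear_op: "linear T"
    and finite_rank: "\<exists>W. finite W \<and> range T \<subseteq> span W"
    and nonneg: "0 \<le> inner x (T x)"
    and symmetric: "inner (T x) y = inner x (T y)"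
begin

context
  fixes c :: real
  assumes c_pos: "c > 0"
begin

private abbreviation (input) shift :: "'a \<Rightarrow> 'a" where
  "shift h \<equiv> T h + c *\<^sub>R h"

private lemma linear_shift: "linear shift"
  using linear_op by (auto intro!: linearI simp: linear_add linear_scale scaleR_add_right)

private lemma inj_shift: "inj shift"
proof -
  have "x = 0" if "shift x = 0" for x
  proof -
    have "inner x (T x) + c * inner x x = 0"
      using arg_cong[OF that, of "inner x"] by (simp add: inner_add_right)
    then have "c * inner x x \<le> 0"
      using nonneg[of x] by linarith
    then have "inner x x \<le> 0"
      using c_pos by (simp add: mult_le_0_iff)
    then show ?thesis by (metis inner_eq_zero_iff order_antisym inner_ge_zero)
  qed
  then show ?thesis
    unfolding linear_injective_0[OF linear_shift] by blast
qed

(* Finite rank replaces completeness: shift maps the finite-dimensional span W of the range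
   injectively, hence onto, itself. *)
private lemma surj_shift: "surj shift"
proof -
  obtain W where W: "finite W" "range T \<subseteq> span W" using finite_rank by blast
  have "shift ` span W \<subseteq> span W"
    using W(2) by (auto intro!: span_add span_scale)
  then have onto: "span W \<subseteq> shift ` span W"
    using span_subset_image_span[OF linear_shift W(1)] inj_on_subset[OF inj_shift subset_UNIV]
    by blast
  have "y \<in> range shift" for y
  proof -
    have "T y \<in> shift ` span W"
      using onto W(2) by blast
    then obtain u where u: "T y = shift u" by (rule imageE)
    have "T ((1 / c) *\<^sub>R (y - u)) = (1 / c) *\<^sub>R (T y - T u)"
      using linear_op by (simp add: linear_scale linear_diff)
    also have "T y - T u = c *\<^sub>R u"
      unfolding u by simp
    finally have "shift ((1 / c) *\<^sub>R (y - u)) = y"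
      using c_pos by simp
    then show ?thesis by (rule range_eqI[OF sym])
  qed
  then show ?thesis by blast
qed

lemma resolv_right: "T (resolv T c y) + c *\<^sub>R resolv T c y = y"
  using surj_f_inv_f[OF surj_shift, of y] unfolding resolv_def by simp

lemma resolv_left: "resolv T c (T x + c *\<^sub>R x) = x"
  using inv_f_f[OF inj_shift, of x] unfolding resolv_def by simp

lemma linear_resolv: "linear (resolv T c)"
proof (rule linearI)
  fix x y :: 'a and r :: real
  let ?u = "resolv T c x" and ?v = "resolv T c y"
  have "x + y = T (?u + ?v) + c *\<^sub>R (?u + ?v)"
    using resolv_right[of x] resolv_right[of y] linear_op
    by (simp add: linear_add algebra_simps)
  then show "resolv T c (x + y) = ?u + ?v"
    by (simp add: resolv_left)
  have "r *\<^sub>R x = r *\<^sub>R (T ?u + c *\<^sub>R ?u)"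
    by (simp only: resolv_right)
  also have "\<dots> = T (r *\<^sub>R ?u) + c *\<^sub>R (r *\<^sub>R ?u)"
    using linear_op by (simp add: linear_scale scaleR_add_right)
  finally show "resolv T c (r *\<^sub>R x) = r *\<^sub>R ?u"
    using resolv_left[of "r *\<^sub>R ?u"] by simp
qed

lemma resolv_symmetric: "inner (resolv T c x) y = inner x (resolv T c y)"
proof -
  let ?u = "resolv T c x" and ?v = "resolv T c y"
  have "inner ?u y = inner ?u (T ?v) + c * inner ?u ?v"
    using arg_cong[OF resolv_right[of y], of "inner ?u"] by (simp add: inner_add_right)
  also have "\<dots> = inner (T ?u + c *\<^sub>R ?u) ?v"
    by (simp add: inner_add_left symmetric)
  finally show ?thesis by (simp add: resolv_right)
qed

lemma resolv_nonneg: "0 \<le> inner x (resolv T c x)"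
proof -
  define u where "u = resolv T c x"
  have "inner x u = inner (T u + c *\<^sub>R u) u"
    by (simp only: u_def resolv_right)
  also have "\<dots> = inner u (T u) + c * inner u u"
    by (simp add: inner_add_left inner_commute[of "T u"])
  finally have "inner x u = inner u (T u) + c * inner u u" .
  then show ?thesis
    using nonneg[of u] c_pos unfolding u_def by simp
qed

end

end

lemma samp_adj_samp:
  "samp_adj k n X (samp k' n X' f) = (\<Sum>i<n. inner f (k' (X' i)) *\<^sub>R k (X i))"
  unfolding samp_adj_def samp_def eval_fun_def by (rule sum.cong) auto

lemma linear_scaled_sum_inner:
  fixes u :: "nat \<Rightarrow> 'a::real_inner" and v :: "nat \<Rightarrow> 'b::real_vector"
  shows "linear (\<lambda>g. a *\<^sub>R (\<Sum>i<n. inner g (u i) *\<^sub>R v i))"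
  by (rule linearI)
    (simp_all add: inner_add_left scaleR_add_left sum.distrib scaleR_add_right scaleR_sum_right
      mult.left_commute)

lemma scaled_sum_in_span: "a *\<^sub>R (\<Sum>i<n. c i *\<^sub>R v i) \<in> span (v ` {..<n})"
  by (intro span_scale span_sum) (auto intro: span_base)

lemma Czx_hat_adjoint: "inner (Czx_hat kx kz n X Z f) g = inner f (Cxz_hat kx kz n X Z g)"
  unfolding Czx_hat_def Cxz_hat_def samp_adj_samp
  by (simp add: inner_sum_left inner_sum_right mult_ac inner_commute)

lemma linear_Czx_hat: "linear (Czx_hat kx kz n X Z)"
  unfolding Czx_hat_def samp_adj_samp by (rule linear_scaled_sum_inner)

lemma linear_Cxz_hat: "linear (Cxz_hat kx kz n X Z)"
  unfolding Cxz_hat_def samp_adj_samp by (rule linear_scaled_sum_inner)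

lemma inner_Cz_hat:
  "inner h (Cz_hat kz n Z g) = (\<Sum>i<n. inner g (kz (Z i)) * inner h (kz (Z i))) / real n"
  unfolding Cz_hat_def samp_adj_samp by (simp add: inner_sum_right)

lemma finite_rank_psd_Cz_hat: "finite_rank_psd (Cz_hat kz n Z)"
proof (rule finite_rank_psd.intro)
  show "linear (Cz_hat kz n Z)"
    unfolding Cz_hat_def samp_adj_samp by (rule linear_scaled_sum_inner)
  show "\<exists>W. finite W \<and> range (Cz_hat kz n Z) \<subseteq> span W"
    unfolding Cz_hat_def samp_adj_samp
    by (intro exI[of _ "(\<lambda>i. kz (Z i)) ` {..<n}"]) (auto intro: scaled_sum_in_span)
  show "0 \<le> inner g (Cz_hat kz n Z g)" for g
    unfolding inner_Cz_hat by (simp add: sum_nonneg)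
  show "inner (Cz_hat kz n Z g) h = inner g (Cz_hat kz n Z h)" for g h
    by (simp add: inner_commute[of "Cz_hat kz n Z g"] inner_Cz_hat mult_ac)
qed

lemma finite_rank_psd_sandwich:
  fixes A :: "'b::real_inner \<Rightarrow> 'b" and B :: "'a::real_inner \<Rightarrow> 'b"
  assumes "linear A" and A_nonneg: "\<And>x. 0 \<le> inner x (A x)"
    and A_sym: "\<And>x y. inner (A x) y = inner x (A y)"
    and "linear B" "linear B'" and adj: "\<And>f g. inner (B f) g = inner f (B' g)"
    and "finite W" "range B' \<subseteq> span W"
  shows "finite_rank_psd (B' \<circ> A \<circ> B)"
proof (rule finite_rank_psd.intro)
  show "linear (B' \<circ> A \<circ> B)"
    using assms by (intro linear_compose)
  show "\<exists>W. finite W \<and> range (B' \<circ> A \<circ> B) \<subseteq> span W"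
    using assms(7,8) by (intro exI[of _ W]) auto
  show "0 \<le> inner f ((B' \<circ> A \<circ> B) f)" for f
    using A_nonneg[of "B f"] by (simp add: adj[symmetric])
  show "inner ((B' \<circ> A \<circ> B) f) g = inner f ((B' \<circ> A \<circ> B) g)" for f g
  proof -
    have "inner (B' (A (B f))) g = inner (B g) (A (B f))"
      by (simp add: inner_commute adj)
    also have "\<dots> = inner (B f) (A (B g))"
      by (simp only: inner_commute[of "B g"] A_sym)
    finally show ?thesis by (simp add: adj)
  qed
qed

locale dual_iv =
  fixes kx :: "'x \<Rightarrow> 'h::real_inner" and kz :: "'z \<Rightarrow> 'i::real_inner"
    and n :: nat and lam nu :: real and X :: "nat \<Rightarrow> 'x" and Z :: "nat \<Rightarrow> 'z"
  assumes n_pos: "n > 0" and lam_pos: "lam > 0" and nu_pos: "nu > 0"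
begin

abbreviation "Czx \<equiv> Czx_hat kx kz n X Z"
abbreviation "Cxz \<equiv> Cxz_hat kx kz n X Z"
abbreviation "V \<equiv> V_hat kx kz n X Z nu"
abbreviation "Cz_inv \<equiv> resolv (Cz_hat kz n Z) (nu / real n)"
abbreviation "V_inv \<equiv> resolv V (lam / real n)"

lemma V_eq: "V = Cxz \<circ> Cz_inv \<circ> Czx"
  unfolding V_hat_def ..

lemma nu_bar_pos: "nu / real n > 0" and lam_bar_pos: "lam / real n > 0"
  using n_pos nu_pos lam_pos by simp_all

sublocale Cz: finite_rank_psd "Cz_hat kz n Z"
  by (rule finite_rank_psd_Cz_hat)

sublocale V: finite_rank_psd V
  unfolding V_eq
proof (rule finite_rank_psd_sandwich)
  show "range Cxz \<subseteq> span ((\<lambda>i. kx (X i)) ` {..<n})"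
    unfolding Cxz_hat_def samp_adj_samp by (auto intro: scaled_sum_in_span)
qed (simp_all add: Cz.linear_resolv Cz.resolv_nonneg Cz.resolv_symmetric nu_bar_pos
       linear_Czx_hat linear_Cxz_hat Czx_hat_adjoint)

lemma inner_DeltaC:
  "inner g (DeltaC kx kz n X Z lam nu h)
     = (lam / real n) * (nu / real n) * inner (Cz_inv (Czx (V_inv g))) (Cz_inv (Czx (V_inv h)))"
proof -
  have "inner g (V_inv (Cxz (Cz_inv (Cz_inv (Czx (V_inv h))))))
      = inner (Cz_inv (Czx (V_inv g))) (Cz_inv (Czx (V_inv h)))"
    by (simp add: V.resolv_symmetric[OF lam_bar_pos, symmetric] Czx_hat_adjoint[symmetric]
        Cz.resolv_symmetric[OF nu_bar_pos])
  then show ?thesis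
    unfolding DeltaC_def by simp
qed

lemma DeltaC_nonneg: "0 \<le> inner h (DeltaC kx kz n X Z lam nu h)"
  unfolding inner_DeltaC using nu_bar_pos lam_bar_pos by (intro mult_nonneg_nonneg) simp_all

lemma DeltaC_symmetric:
  "inner g (DeltaC kx kz n X Z lam nu h) = inner (DeltaC kx kz n X Z lam nu g) h"
  using inner_commute[of "DeltaC kx kz n X Z lam nu g" h]
    inner_commute[of "Cz_inv (Czx (V_inv g))" "Cz_inv (Czx (V_inv h))"]
  unfolding inner_DeltaC by simp

definition weights :: "'h \<Rightarrow> nat \<Rightarrow> real" where
  "weights k i = inner (Cz_inv (Czx (V_inv k))) (kz (Z i)) / real n"

lemma inner_f_hat: "inner k (f_hat kx kz n X Z lam nu Y) = (\<Sum>i<n. weights k i * Y i)"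
proof -
  have "inner k (f_hat kx kz n X Z lam nu Y)
      = inner (Cz_inv (Czx (V_inv k))) ((1 / real n) *\<^sub>R samp_adj kz n Z Y)"
    unfolding f_hat_def
    by (simp only: V.resolv_symmetric[OF lam_bar_pos, symmetric] Czx_hat_adjoint[symmetric]
        Cz.resolv_symmetric[OF nu_bar_pos, symmetric])
  also have "\<dots> = (\<Sum>i<n. weights k i * Y i)"
    unfolding samp_adj_def weights_def by (simp add: inner_sum_right sum_divide_distrib mult_ac)
  finally show ?thesis .
qed

lemma sum_weights_features: "(\<Sum>i<n. weights k i *\<^sub>R kx (X i)) = k - (lam / real n) *\<^sub>R V_inv k"
proof -
  have "(\<Sum>i<n. weights k i *\<^sub>R kx (X i)) = V (V_inv k)"
    unfolding V_eq Cxz_hat_def samp_adj_samp weights_def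
    by (simp add: scaleR_sum_right)
  also have "\<dots> = k - (lam / real n) *\<^sub>R V_inv k"
    using V.resolv_right[OF lam_bar_pos, of k] by (simp add: algebra_simps)
  finally show ?thesis .
qed

lemma C_post_eq: "C_post kx kz n X Z lam nu k = (lam / real n) *\<^sub>R V_inv k"
proof -
  have "V_inv (V k) + (lam / real n) *\<^sub>R V_inv k = k"
    using V.resolv_left[OF lam_bar_pos, of k] V.linear_resolv[OF lam_bar_pos]
    by (simp add: linear_add linear_scale)
  then show ?thesis
    unfolding C_post_def by (metis add_diff_cancel_left')
qed

lemma inner_C_post_decomposition:
  "inner k (C_post kx kz n X Z lam nu k)
     = (norm (k - (\<Sum>i<n. weights k i *\<^sub>R kx (X i))))\<^sup>2 + lam * (\<Sum>i<n. (weights k i)\<^sup>2)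
       + inner k (DeltaC kx kz n X Z lam nu k)"
proof -
  define lb nb where "lb = lam / real n" and "nb = nu / real n"
  define r where "r = V_inv k"
  define w where "w = Cz_inv (Czx r)"
  have C_post: "inner k (C_post kx kz n X Z lam nu k) = lb * inner k r"
    unfolding C_post_eq r_def lb_def by simp
  have "inner (V r) r = inner (Czx r) w"
    unfolding V_eq w_def by (simp add: inner_commute Czx_hat_adjoint)
  also have "Czx r = Cz_hat kz n Z w + nb *\<^sub>R w"
    using Cz.resolv_right[OF nu_bar_pos] unfolding w_def nb_def by simp
  finally have "inner (V r) r = inner w (Cz_hat kz n Z w) + nb * inner w w"
    by (simp add: inner_add_left Cz.symmetric)
  moreover have "k = V r + lb *\<^sub>R r"
    using V.resolv_right[OF lam_bar_pos, of k] unfolding r_def lb_def by simp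
  ultimately have "inner k r = inner w (Cz_hat kz n Z w) + nb * inner w w + lb * inner r r"
    by (metis inner_add_left inner_scaleR_left)
  moreover have "lb * inner w (Cz_hat kz n Z w) = lam * (\<Sum>i<n. (weights k i)\<^sup>2)"
    unfolding inner_Cz_hat weights_def w_def r_def lb_def
    by (simp add: power2_eq_square sum_distrib_left sum_divide_distrib mult_ac)
  moreover have "inner k (DeltaC kx kz n X Z lam nu k) = lb * nb * inner w w"
    unfolding inner_DeltaC w_def r_def lb_def nb_def ..
  moreover have "(norm (k - (\<Sum>i<n. weights k i *\<^sub>R kx (X i))))\<^sup>2 = lb * lb * inner r r"
    unfolding sum_weights_features r_def lb_def power2_norm_eq_inner by simp
  ultimately show ?thesis
    unfolding C_post by (simp add: algebra_simps)
qed

end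

locale white_noise = prob_space +
  fixes e :: "nat \<Rightarrow> 'a \<Rightarrow> real" and n :: nat and v :: real
  assumes indep: "indep_vars (\<lambda>_. borel) e {..<n}"
    and sq: "\<forall>i<n. integrable M (\<lambda>w. (e i w)\<^sup>2)"
    and mean: "\<forall>i<n. expectation (e i) = 0"
    and var: "\<forall>i<n. variance (e i) = v"
begin

lemma integrable_noise: "i < n \<Longrightarrow> integrable M (e i)"
  using indep sq unfolding indep_vars_def by (auto intro: square_integrable_imp_integrable)

lemma expectation_noise_product:
  assumes "i < n" "j < n"
  shows "integrable M (\<lambda>w. e i w * e j w)"
    and "expectation (\<lambda>w. e i w * e j w) = (if i = j then v else 0)"
proof -
  have "integrable M (\<lambda>w. e i w * e j w) \<and> expectation (\<lambda>w. e i w * e j w) = (if i = j then v else 0)"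
  proof (cases "i = j")
    case True
    then show ?thesis using sq var mean \<open>j < n\<close> by (simp add: power2_eq_square)
  next
    case False
    have "indep_vars (\<lambda>_. borel) e {i, j}"
      by (rule indep_vars_subset[OF indep]) (use \<open>i < n\<close> \<open>j < n\<close> in auto)
    then have "indep_var borel (e i) borel (\<lambda>w. \<Sum>k\<in>{j}. e k w)"
      using False by (intro indep_vars_sum) auto
    then have ij: "indep_var borel (e i) borel (e j)" by simp
    show ?thesis
      using indep_var_lebesgue_integral[OF ij] indep_var_integrable[OF ij]
        integrable_noise \<open>i < n\<close> \<open>j < n\<close> mean False by simp
  qed
  then show "integrable M (\<lambda>w. e i w * e j w)"
    and "expectation (\<lambda>w. e i w * e j w) = (if i = j then v else 0)" by auto
qed

lemma expectation_square_plus_noise: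
  fixes G :: "'a \<Rightarrow> real" and b :: "nat \<Rightarrow> real"
  assumes G_sq: "integrable M (\<lambda>w. (G w)\<^sup>2)"
    and uncorr: "\<forall>i<n. integrable M (\<lambda>w. G w * e i w) \<and> expectation (\<lambda>w. G w * e i w) = 0"
  shows "expectation (\<lambda>w. (G w + (\<Sum>i<n. b i * e i w))\<^sup>2)
         = expectation (\<lambda>w. (G w)\<^sup>2) + v * (\<Sum>i<n. (b i)\<^sup>2)"
proof -
  note ee = expectation_noise_product
  have expand: "(G w + (\<Sum>i<n. b i * e i w))\<^sup>2 = (G w)\<^sup>2 + (\<Sum>i<n. (2 * b i) * (G w * e i w))
      + (\<Sum>i<n. \<Sum>j<n. (b i * b j) * (e i w * e j w))" for w
  proof -
    have "(\<Sum>i<n. b i * e i w)\<^sup>2 = (\<Sum>i<n. \<Sum>j<n. (b i * b j) * (e i w * e j w))"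
      by (simp add: power2_eq_square sum_product mult_ac)
    moreover have "2 * G w * (\<Sum>i<n. b i * e i w) = (\<Sum>i<n. (2 * b i) * (G w * e i w))"
      by (simp add: sum_distrib_left mult_ac)
    ultimately show ?thesis by (simp add: power2_sum)
  qed
  have int_cross: "integrable M (\<lambda>w. \<Sum>i<n. (2 * b i) * (G w * e i w))"
    using uncorr by auto
  have int_noise: "integrable M (\<lambda>w. \<Sum>i<n. \<Sum>j<n. (b i * b j) * (e i w * e j w))"
    using ee(1) by (intro Bochner_Integration.integrable_sum integrable_mult_right) auto
  have cross: "expectation (\<lambda>w. \<Sum>i<n. (2 * b i) * (G w * e i w)) = 0"
    using uncorr by (subst Bochner_Integration.integral_sum) auto
  have noise: "expectation (\<lambda>w. \<Sum>i<n. \<Sum>j<n. (b i * b j) * (e i w * e j w))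
      = v * (\<Sum>i<n. (b i)\<^sup>2)"
  proof -
    have "expectation (\<lambda>w. \<Sum>i<n. \<Sum>j<n. (b i * b j) * (e i w * e j w))
        = (\<Sum>i<n. \<Sum>j<n. expectation (\<lambda>w. (b i * b j) * (e i w * e j w)))"
    proof (subst Bochner_Integration.integral_sum)
      show "(\<Sum>i<n. expectation (\<lambda>w. \<Sum>j<n. (b i * b j) * (e i w * e j w)))
          = (\<Sum>i<n. \<Sum>j<n. expectation (\<lambda>w. (b i * b j) * (e i w * e j w)))"
        using ee(1)
        by (intro sum.cong refl Bochner_Integration.integral_sum integrable_mult_right) auto
    qed (use ee(1) in auto)
    also have "\<dots> = (\<Sum>i<n. \<Sum>j<n. (b i * b j) * (if i = j then v else 0))"
      using ee(2) by simp
    also have "\<dots> = v * (\<Sum>i<n. (b i)\<^sup>2)"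
      by (simp add: if_distrib[of "\<lambda>x. _ * x"] sum.If_cases power2_eq_square sum_distrib_left
          mult_ac)
    finally show ?thesis .
  qed
  show ?thesis
    unfolding expand using G_sq int_cross int_noise cross noise by (simp add: integral_add)
qed

end

lemma centred_gaussian_moments:
  assumes "prob_space M" and gauss: "centred_gaussian M W v"
  shows "integrable M W" and "integrable M (\<lambda>w. (W w)\<^sup>2)" and "integral\<^sup>L M W = 0"
    and "integral\<^sup>L M (\<lambda>w. (W w)\<^sup>2) = v"
proof -
  interpret prob_space M by fact
  have [measurable]: "W \<in> borel_measurable M"
    using gauss unfolding centred_gaussian_def by blast
  have "integrable M W \<and> integrable M (\<lambda>w. (W w)\<^sup>2) \<and> integral\<^sup>L M W = 0
        \<and> integral\<^sup>L M (\<lambda>w. (W w)\<^sup>2) = v"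
  proof (cases "v = 0")
    case True
    then have ae: "AE w in M. W w = 0"
      using gauss unfolding centred_gaussian_def by simp
    have ae2: "AE w in M. (W w)\<^sup>2 = 0"
      using ae by eventually_elim simp
    have "integrable M W"
      by (rule integrable_cong_AE_imp[of M "\<lambda>_. 0"]) (use ae in auto)
    moreover have "integrable M (\<lambda>w. (W w)\<^sup>2)"
      by (rule integrable_cong_AE_imp[of M "\<lambda>_. 0"]) (use ae2 in auto)
    ultimately show ?thesis
      using True integral_cong_AE[of W M "\<lambda>_. 0"] integral_cong_AE[of "\<lambda>w. (W w)\<^sup>2" M "\<lambda>_. 0"]
        ae ae2 by simp
  next
    case False
    then have "v > 0" and D: "distributed M lborel W (normal_density 0 (sqrt v))"
      using gauss unfolding centred_gaussian_def by auto
    then have sd: "0 < sqrt v" by simp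
    have "integrable M W"
      using distributed_integrable[OF D, of "\<lambda>x. x"]
        integrable.intros[OF normal_moment_nz_1[OF sd, of 0]] by simp
    moreover have "integrable M (\<lambda>w. (W w)\<^sup>2)"
      using distributed_integrable[OF D, of "\<lambda>x. x\<^sup>2"]
        integrable.intros[OF normal_moment_even[OF sd, of 0 1]] by simp
    moreover have "expectation W = 0"
      using normal_distributed_expectation[OF sd D] .
    moreover have "variance W = v"
      using normal_distributed_variance[OF sd D] \<open>v > 0\<close> by simp
    ultimately show ?thesis by simp
  qed
  then show "integrable M W" and "integrable M (\<lambda>w. (W w)\<^sup>2)" and "integral\<^sup>L M W = 0"
    and "integral\<^sup>L M (\<lambda>w. (W w)\<^sup>2) = v" by auto
qed

lemma Sup_unit_inner_square:
  fixes d :: "'a::real_inner"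
  assumes "\<exists>f::'a. f \<noteq> 0"
  shows "Sup {(inner f d)\<^sup>2 + q | f. norm f = 1} = (norm d)\<^sup>2 + q"
proof (rule cSup_eq_maximum)
  obtain u :: 'a where u: "norm u = 1" "inner u d = norm d"
  proof (cases "d = 0")
    case True
    obtain f :: 'a where "f \<noteq> 0" using assms by blast
    then show ?thesis using True by (intro that[of "f /\<^sub>R norm f"]) simp_all
  next
    case False
    then show ?thesis by (intro that[of "d /\<^sub>R norm d"]) (simp_all add: dot_square_norm power2_eq_square)
  qed
  then show "(norm d)\<^sup>2 + q \<in> {(inner f d)\<^sup>2 + q | f. norm f = 1}" by force
  fix x assume "x \<in> {(inner f d)\<^sup>2 + q | f. norm f = 1}"
  then obtain f where "norm f = 1" "x = (inner f d)\<^sup>2 + q" by blast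
  moreover have "\<bar>inner f d\<bar> \<le> \<bar>norm d\<bar>"
    using Cauchy_Schwarz_ineq2[of f d] \<open>norm f = 1\<close> by simp
  then have "(inner f d)\<^sup>2 \<le> (norm d)\<^sup>2"
    by (simp only: abs_le_square_iff)
  ultimately show "x \<le> (norm d)\<^sup>2 + q" by simp
qed

lemma borel_measurable_sigma_preimages:
  assumes "{f -` B \<inter> \<Omega> | B. B \<in> sets borel} \<subseteq> A" and "A \<subseteq> Pow \<Omega>"
  shows "f \<in> borel_measurable (sigma \<Omega> A)"
proof (rule measurableI)
  fix B :: "'b set" assume "B \<in> sets borel"
  then have "f -` B \<inter> \<Omega> \<in> sigma_sets \<Omega> A"
    using assms(1) by blast
  then show "f -` B \<inter> space (sigma \<Omega> A) \<in> sets (sigma \<Omega> A)"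
    using assms(2) by simp
qed simp

lemma (in prob_space) uncorrelated_if_indep_generated:
  fixes G :: "'a \<Rightarrow> real" and e :: "'i \<Rightarrow> 'a \<Rightarrow> real"
  assumes indep: "indep_set (sigma_sets (space M) A)
      (sigma_sets (space M) (\<Union>i\<in>I. {e i -` B \<inter> space M | B. B \<in> sets borel}))"
    and A: "A \<subseteq> Pow (space M)" and G: "G \<in> borel_measurable (sigma (space M) A)"
    and "integrable M G" and "i \<in> I" and "integrable M (e i)" and "expectation (e i) = 0"
  shows "integrable M (\<lambda>w. G w * e i w)" and "expectation (\<lambda>w. G w * e i w) = 0"
proof -
  have "sigma_sets (space M) {G -` B \<inter> space M | B. B \<in> sets borel} \<subseteq> sigma_sets (space M) A"
    using measurable_sets[OF G] A by (intro sigma_sets_mono) auto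
  moreover have "sigma_sets (space M) {e i -` B \<inter> space M | B. B \<in> sets borel}
      \<subseteq> sigma_sets (space M) (\<Union>i\<in>I. {e i -` B \<inter> space M | B. B \<in> sets borel})"
    using \<open>i \<in> I\<close> by (intro sigma_sets_subseteq) auto
  ultimately have "indep_set (sigma_sets (space M) {G -` B \<inter> space M | B. B \<in> sets borel})
      (sigma_sets (space M) {e i -` B \<inter> space M | B. B \<in> sets borel})"
    using indep unfolding indep_set_def by (elim indep_sets_mono_sets) (auto split: bool.split)
  then have GE: "indep_var borel G borel (e i)"
    unfolding indep_var_eq using assms(4,6) by auto
  show "integrable M (\<lambda>w. G w * e i w)"
    using indep_var_integrable[OF GE assms(4,6)] .
  show "expectation (\<lambda>w. G w * e i w) = 0"
    using indep_var_lebesgue_integral[OF GE assms(4,6)] assms(7) by simp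
qed

lemma gp_with_functional_residual:
  fixes kx :: "'x \<Rightarrow> 'h::real_inner"
  assumes gp: "gp_with_functional M kx kstar F L" and fin: "finite I"
  shows "centred_gaussian M (\<lambda>w. (\<Sum>i\<in>I. b i * F (X i) w) - L w)
           ((norm (kstar - (\<Sum>i\<in>I. b i *\<^sub>R kx (X i))))\<^sup>2)"
proof -
  define S where "S = X ` I"
  \<comment> \<open>gp_with_functional speaks of sums over sets of points, so repeated inputs are merged.\<close>
  define c where "c x = (\<Sum>i\<in>{i\<in>I. X i = x}. b i)" for x
  have group: "(\<Sum>x\<in>S. c x *\<^sub>R u x) = (\<Sum>i\<in>I. b i *\<^sub>R u (X i))"
    for u :: "'x \<Rightarrow> 'v::real_vector"
  proof -
    have "(\<Sum>x\<in>S. c x *\<^sub>R u x) = (\<Sum>x\<in>S. \<Sum>i\<in>{i\<in>I. X i = x}. b i *\<^sub>R u (X i))"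
      unfolding c_def by (rule sum.cong) (auto simp: scaleR_sum_left)
    also have "\<dots> = (\<Sum>i\<in>I. b i *\<^sub>R u (X i))"
      using fin by (intro sum.group) (auto simp: S_def)
    finally show ?thesis .
  qed
  define s where "s = (\<Sum>i\<in>I. b i *\<^sub>R kx (X i))"
  have s_S: "s = (\<Sum>x\<in>S. c x *\<^sub>R kx x)"
    unfolding s_def group ..
  have "(norm (kstar - s))\<^sup>2 = (norm kstar)\<^sup>2 - 2 * inner kstar s + inner s s"
    by (simp add: power2_norm_eq_inner inner_diff_left inner_diff_right inner_commute)
  also have "inner kstar s = (\<Sum>x\<in>S. c x * eval_fun kx kstar x)"
    unfolding s_S eval_fun_def by (simp add: inner_sum_right)
  also have "inner s s = (\<Sum>x\<in>S. \<Sum>x'\<in>S. c x * c x' * inner (kx x) (kx x'))"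
    unfolding s_S
    by (simp add: inner_sum_left inner_sum_right sum_distrib_left mult_ac)
      (intro sum.cong refl, simp add: inner_commute)
  finally have var: "(norm (kstar - s))\<^sup>2 = (-1)\<^sup>2 * (norm kstar)\<^sup>2
      + 2 * (-1) * (\<Sum>x\<in>S. c x * eval_fun kx kstar x)
      + (\<Sum>x\<in>S. \<Sum>x'\<in>S. c x * c x' * inner (kx x) (kx x'))"
    by simp
  have residual: "(\<lambda>w. (-1) * L w + (\<Sum>x\<in>S. c x * F x w)) = (\<lambda>w. (\<Sum>i\<in>I. b i * F (X i) w) - L w)"
    using group[of "\<lambda>x. F x _"] by simp
  have "finite S"
    using fin by (simp add: S_def)
  then have "centred_gaussian M (\<lambda>w. (-1) * L w + (\<Sum>x\<in>S. c x * F x w))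
      ((-1)\<^sup>2 * (norm kstar)\<^sup>2 + 2 * (-1) * (\<Sum>x\<in>S. c x * eval_fun kx kstar x)
       + (\<Sum>x\<in>S. \<Sum>x'\<in>S. c x * c x' * inner (kx x) (kx x')))"
    using gp unfolding gp_with_functional_def by blast
  then show ?thesis
    by (simp only: residual var[symmetric] s_def)
qed

locale dual_iv_with_noise = dual_iv kx kz n lam nu X Z + white_noise M e n lam
  for kx :: "'x \<Rightarrow> 'h::real_inner" and kz :: "'z \<Rightarrow> 'i::real_inner" and n lam nu X Z
    and M :: "'w measure" and e
begin

lemma expected_sq_error_fixed:
  "expectation (\<lambda>w.
      (inner k (f_hat kx kz n X Z lam nu (\<lambda>i. eval_fun kx f0 (X i) + e i w)) - inner k f0)\<^sup>2)
     = (inner f0 (k - (\<Sum>i<n. weights k i *\<^sub>R kx (X i))))\<^sup>2 + lam * (\<Sum>i<n. (weights k i)\<^sup>2)"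
proof -
  define d where "d = k - (\<Sum>i<n. weights k i *\<^sub>R kx (X i))"
  have "inner k (f_hat kx kz n X Z lam nu (\<lambda>i. eval_fun kx f0 (X i) + e i w)) - inner k f0
      = - inner f0 d + (\<Sum>i<n. weights k i * e i w)" for w
    unfolding inner_f_hat d_def eval_fun_def
    by (simp add: distrib_left sum.distrib inner_diff_right inner_sum_right inner_commute)
  then show ?thesis
    using expectation_square_plus_noise[of "\<lambda>_. - inner f0 d"] integrable_noise mean
    unfolding d_def[symmetric] by (simp add: prob_space)
qed

lemma expected_sq_error_gp:
  assumes gp: "gp_with_functional M kx k F L"
    and indep_gp: "indep_set
        (sigma_sets (space M) ({L -` B \<inter> space M | B. B \<in> sets borel}
                               \<union> (\<Union>x. {F x -` B \<inter> space M | B. B \<in> sets borel})))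
        (sigma_sets (space M) (\<Union>i<n. {e i -` B \<inter> space M | B. B \<in> sets borel}))"
  shows "expectation (\<lambda>w. (inner k (f_hat kx kz n X Z lam nu (\<lambda>i. F (X i) w + e i w)) - L w)\<^sup>2)
     = (norm (k - (\<Sum>i<n. weights k i *\<^sub>R kx (X i))))\<^sup>2 + lam * (\<Sum>i<n. (weights k i)\<^sup>2)"
proof -
  define G where "G w = (\<Sum>i<n. weights k i * F (X i) w) - L w" for w
  define gen where "gen = {L -` B \<inter> space M | B. B \<in> sets borel}
      \<union> (\<Union>x. {F x -` B \<inter> space M | B. B \<in> sets borel})"
  have G_gauss: "centred_gaussian M G ((norm (k - (\<Sum>i<n. weights k i *\<^sub>R kx (X i))))\<^sup>2)"
    using gp_with_functional_residual[OF gp, of "{..<n}"] unfolding G_def by simp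
  note G_moments = centred_gaussian_moments[OF prob_space_axioms G_gauss]
  have gen_Pow: "gen \<subseteq> Pow (space M)"
    unfolding gen_def by auto
  have [measurable]: "L \<in> borel_measurable (sigma (space M) gen)"
    by (rule borel_measurable_sigma_preimages[OF _ gen_Pow]) (auto simp: gen_def)
  have [measurable]: "F x \<in> borel_measurable (sigma (space M) gen)" for x
    by (rule borel_measurable_sigma_preimages[OF _ gen_Pow]) (auto simp: gen_def)
  have "G \<in> borel_measurable (sigma (space M) gen)"
    unfolding G_def by measurable
  then have "\<forall>i<n. integrable M (\<lambda>w. G w * e i w) \<and> expectation (\<lambda>w. G w * e i w) = 0"
    using uncorrelated_if_indep_generated[OF indep_gp[folded gen_def] gen_Pow] G_moments
      integrable_noise mean by auto
  moreover have "inner k (f_hat kx kz n X Z lam nu (\<lambda>i. F (X i) w + e i w)) - L w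
      = G w + (\<Sum>i<n. weights k i * e i w)" for w
    unfolding inner_f_hat G_def by (simp add: distrib_left sum.distrib)
  ultimately show ?thesis
    using expectation_square_plus_noise[of G] G_moments by simp
qed

end

theorem mainTheorem5:
  fixes kx :: "'x \<Rightarrow> 'h::{real_inner,complete_space}"
    and kz :: "'z \<Rightarrow> 'i::{real_inner,complete_space}"
    and n :: nat and lam nu :: real
    and X :: "nat \<Rightarrow> 'x" and Z :: "nat \<Rightarrow> 'z"
    and M :: "'w measure" and e :: "nat \<Rightarrow> 'w \<Rightarrow> real"
    and F :: "'x \<Rightarrow> 'w \<Rightarrow> real" and L :: "'w \<Rightarrow> real"
    and kstar :: 'h
  assumes rkx: "rkhs_feature kx" and rkz: "rkhs_feature kz"
    and Hnontriv: "\<exists>f::'h. f \<noteq> 0"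
    and n_pos: "n > 0" and lam_pos: "lam > 0" and nu_pos: "nu > 0"
    and M: "prob_space M"
    and e_indep: "prob_space.indep_vars M (\<lambda>_. borel) e {..<n}"
    and e_ident: "\<forall>i<n. distr M borel (e i) = distr M borel (e 0)"
    and e_sq: "\<forall>i<n. integrable M (\<lambda>w. (e i w)\<^sup>2)"
    and e_mean: "\<forall>i<n. prob_space.expectation M (e i) = 0"
    and e_var: "\<forall>i<n. prob_space.variance M (e i) = lam"
    and gp: "gp_with_functional M kx kstar F L"
    and e_indep_gp: "prob_space.indep_set M
        (sigma_sets (space M) ({L -` B \<inter> space M | B. B \<in> sets borel}
                               \<union> (\<Union>x. {F x -` B \<inter> space M | B. B \<in> sets borel})))
        (sigma_sets (space M) (\<Union>i<n. {e i -` B \<inter> space M | B. B \<in> sets borel}))"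
  shows "(\<forall>h. 0 \<le> inner h (DeltaC kx kz n X Z lam nu h)) \<and>
         (\<forall>g h. inner g (DeltaC kx kz n X Z lam nu h) = inner (DeltaC kx kz n X Z lam nu g) h) \<and>
         inner kstar (C_post kx kz n X Z lam nu kstar) =
           Sup {prob_space.expectation M (\<lambda>w.
                  (inner kstar (f_hat kx kz n X Z lam nu (\<lambda>i. eval_fun kx f0 (X i) + e i w))
                   - inner kstar f0)\<^sup>2) | f0. norm f0 = 1}
           + inner kstar (DeltaC kx kz n X Z lam nu kstar) \<and>
         inner kstar (C_post kx kz n X Z lam nu kstar) =
           prob_space.expectation M (\<lambda>w.
                  (inner kstar (f_hat kx kz n X Z lam nu (\<lambda>i. F (X i) w + e i w)) - L w)\<^sup>2)
           + inner kstar (DeltaC kx kz n X Z lam nu kstar)"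
proof -
  interpret dual_iv_with_noise kx kz n lam nu X Z M e
    using n_pos lam_pos nu_pos M e_indep e_sq e_mean e_var
    by (intro dual_iv_with_noise.intro dual_iv.intro white_noise.intro white_noise_axioms.intro)
  show ?thesis
    using DeltaC_nonneg DeltaC_symmetric inner_C_post_decomposition[of kstar]
      Sup_unit_inner_square[OF Hnontriv] expected_sq_error_fixed expected_sq_error_gp[OF gp e_indep_gp]
    by simp
qed

end
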